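(* Let $r,u$ be positive integers with $\min\{r,u\}>1$, $q$ a prime power, and $j$ a positive integer. If there exists a block totally nonsingular array $\mathbf{A}\in\mathrm{GL}(\mathbb{F}_q,j)^{r\times u}$, then $j\ge\lceil\max\{\log_q(r+1),\log_q(u+1)\}\rceil$.
   Context: $\mathrm{GL}(\mathbb{F},j)$ is the set of invertible $j\times j$ matrices over $\mathbb{F}$. An $r\times u$ block array $\mathbf{A}=[A_{i,k}]_{i\in[r],k\in[u]}$ with each $A_{i,k}\in\mathrm{GL}(\mathbb{F},j)$ is block totally nonsingular if for all $S\subseteq[r]$, $S'\subseteq[u]$ with $|S|=|S'|$, the $j|S|\times j|S'|$ matrix $[A_{i,k}]_{i\in S,k\in S'}$ is nonsingular. *)

theory Defs
  imports Complex_Main "Jordan_Normal_Form.Determinant"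
begin

definition in_GL :: "nat \<Rightarrow> 'a::field mat \<Rightarrow> bool" where
  "in_GL j M \<longleftrightarrow> M \<in> carrier_mat j j \<and> det M \<noteq> 0"

definition block_submatrix ::
  "nat \<Rightarrow> (nat \<Rightarrow> nat \<Rightarrow> 'a mat) \<Rightarrow> nat set \<Rightarrow> nat set \<Rightarrow> 'a mat" where
  "block_submatrix j A S S' =
     mat (j * card S) (j * card S')
       (\<lambda>(a, b). A (sorted_list_of_set S ! (a div j)) (sorted_list_of_set S' ! (b div j))
                  $$ (a mod j, b mod j))"

definition block_totally_nonsingular ::
  "nat \<Rightarrow> nat \<Rightarrow> nat \<Rightarrow> (nat \<Rightarrow> nat \<Rightarrow> 'a::field mat) \<Rightarrow> bool" where
  "block_totally_nonsingular j r u A \<longleftrightarrow>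
     (\<forall>i<r. \<forall>k<u. in_GL j (A i k)) \<and>
     (\<forall>S S'. S \<subseteq> {0..<r} \<longrightarrow> S' \<subseteq> {0..<u} \<longrightarrow> card S = card S' \<longrightarrow>
        det (block_submatrix j A S S') \<noteq> 0)"

end

theory Submission
  imports Defs
begin

text \<open>Take two block columns of the array, with invertible blocks \<open>P\<^sub>i\<close>, \<open>Q\<^sub>i\<close> in row \<open>i\<close>.
  For a fixed nonzero vector \<open>v\<close> solve \<open>P\<^sub>i w\<^sub>i + Q\<^sub>i v = 0\<close>. Then \<open>w\<^sub>i \<noteq> 0\<close> because \<open>Q\<^sub>i\<close>
  is invertible, and the \<open>w\<^sub>i\<close> are pairwise distinct, since \<open>w\<^sub>i = w\<^sub>k\<close> would put \<open>(w\<^sub>i, v)\<close> in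
  the kernel of the nonsingular 2\<times>2 block submatrix on rows \<open>i, k\<close>. Hence \<open>0\<close> and the \<open>r\<close>
  vectors \<open>w\<^sub>i\<close> are distinct in \<open>\<bbbF>\<^sub>q\<^sup>j\<close>, so \<open>r + 1 \<le> q\<^sup>j\<close>; transposing every block gives
  \<open>u + 1 \<le> q\<^sup>j\<close>.\<close>

lemma card_carrier_vec: "card (carrier_vec n :: 'a::finite vec set) = card (UNIV :: 'a set) ^ n"
proof -
  have "bij_betw list_of_vec (carrier_vec n :: 'a vec set) {xs. set xs \<subseteq> UNIV \<and> length xs = n}"
  proof (rule bij_betw_byWitness[where f' = vec_of_list])
    show "\<forall>v \<in> carrier_vec n. vec_of_list (list_of_vec v) = (v :: 'a vec)"
      by (simp add: vec_list)
    show "\<forall>xs \<in> {xs. set xs \<subseteq> UNIV \<and> length xs = n}. list_of_vec (vec_of_list xs :: 'a vec) = xs"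
      by (simp add: list_vec)
    show "list_of_vec ` carrier_vec n \<subseteq> {xs. set xs \<subseteq> (UNIV :: 'a set) \<and> length xs = n}"
      by auto
    show "vec_of_list ` {xs. set xs \<subseteq> UNIV \<and> length xs = n} \<subseteq> (carrier_vec n :: 'a vec set)"
      by (auto intro: carrier_vecI)
  qed
  then have "card (carrier_vec n :: 'a vec set) = card {xs. set xs \<subseteq> (UNIV :: 'a set) \<and> length xs = n}"
    by (rule bij_betw_same_card)
  also have "\<dots> = card (UNIV :: 'a set) ^ n"
    by (rule card_lists_length_eq) simp
  finally show ?thesis .
qed

lemma finite_carrier_vec: "finite (carrier_vec n :: 'a::finite vec set)"
proof (rule card_ge_0_finite)
  show "card (carrier_vec n :: 'a vec set) > 0"
    unfolding card_carrier_vec by (simp add: card_gt_0_iff)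
qed

lemma nonsingular_mat_solvable:
  fixes A :: "'a::field mat"
  assumes A: "A \<in> carrier_mat n n" and "det A \<noteq> 0" and b: "b \<in> carrier_vec n"
  shows "\<exists>x \<in> carrier_vec n. A *\<^sub>v x = b"
proof -
  obtain B where B: "B \<in> carrier_mat n n" and "B * A = 1\<^sub>m n"
    using det_non_zero_imp_unit[OF assms(1,2), unfolded Units_def, of "()"]
    by (auto simp: ring_mat_def)
  then have "A * B = 1\<^sub>m n"
    using mat_mult_left_right_inverse[OF B A] by simp
  then have "A *\<^sub>v (B *\<^sub>v b) = b"
    using A B b by (metis assoc_mult_mat_vec one_mult_mat_vec)
  then show ?thesis
    using B b by (intro bexI[of _ "B *\<^sub>v b"]) auto
qed

lemma det_four_block_mat_eq_0_if_common_kernel: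
  fixes P Q P' Q' :: "'a::idom mat"
  assumes carr: "P \<in> carrier_mat n n" "Q \<in> carrier_mat n n" "P' \<in> carrier_mat n n" "Q' \<in> carrier_mat n n"
    and x: "x \<in> carrier_vec n" and y: "y \<in> carrier_vec n" "y \<noteq> 0\<^sub>v n"
    and "P *\<^sub>v x + Q *\<^sub>v y = 0\<^sub>v n" "P' *\<^sub>v x + Q' *\<^sub>v y = 0\<^sub>v n"
  shows "det (four_block_mat P Q P' Q') = 0"
proof -
  have zero: "0\<^sub>v n @\<^sub>v 0\<^sub>v n = (0\<^sub>v (n + n) :: 'a vec)" by auto
  have "four_block_mat P Q P' Q' *\<^sub>v (x @\<^sub>v y) = 0\<^sub>v (n + n)"
    using four_block_mat_mult_vec[OF carr x y(1)] assms(8,9) zero by simp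
  moreover have "x @\<^sub>v y \<noteq> 0\<^sub>v (n + n)"
    using y append_vec_eq[OF x zero_carrier_vec] zero by metis
  ultimately show ?thesis
    using x y four_block_carrier_mat[OF carr(1,4)]
    by (subst det_0_iff_vec_prod_zero) auto
qed

lemma card_le_of_nonsingular_block_pairs:
  fixes P Q :: "'i::linorder \<Rightarrow> 'a::{field,finite} mat"
  assumes "finite I" and "n > 0"
    and PQ: "\<And>i. i \<in> I \<Longrightarrow> P i \<in> carrier_mat n n \<and> Q i \<in> carrier_mat n n \<and> det (P i) \<noteq> 0 \<and> det (Q i) \<noteq> 0"
    and pairs: "\<And>i i'. i \<in> I \<Longrightarrow> i' \<in> I \<Longrightarrow> i < i' \<Longrightarrow> det (four_block_mat (P i) (Q i) (P i') (Q i')) \<noteq> 0"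
  shows "card I + 1 \<le> card (UNIV :: 'a set) ^ n"
proof -
  define v :: "'a vec" where "v = vec n (\<lambda>_. 1)"
  have v: "v \<in> carrier_vec n" "v \<noteq> 0\<^sub>v n"
    using \<open>n > 0\<close> by (auto simp: v_def vec_eq_iff)
  have "\<exists>x \<in> carrier_vec n. P i *\<^sub>v x = - (Q i *\<^sub>v v)" if "i \<in> I" for i
    using PQ[OF that] v by (intro nonsingular_mat_solvable) auto
  then obtain w where "\<And>i. i \<in> I \<Longrightarrow> w i \<in> carrier_vec n \<and> P i *\<^sub>v w i = - (Q i *\<^sub>v v)"
    by (metis (no_types))
  then have w: "w i \<in> carrier_vec n" "P i *\<^sub>v w i + Q i *\<^sub>v v = 0\<^sub>v n" if "i \<in> I" for i
    using PQ[OF that] v that uminus_l_inv_vec[of "Q i *\<^sub>v v" n] by auto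
  have w_nonzero: "w i \<noteq> 0\<^sub>v n" if "i \<in> I" for i
  proof
    assume "w i = 0\<^sub>v n"
    moreover have "P i *\<^sub>v 0\<^sub>v n = 0\<^sub>v n"
      using PQ[OF that] by auto
    ultimately have "Q i *\<^sub>v v = 0\<^sub>v n"
      using w[OF that] PQ[OF that] v by auto
    then show False
      using PQ[OF that] v det_0_iff_vec_prod_zero by blast
  qed
  have w_less: "w i \<noteq> w i'" if i: "i \<in> I" "i' \<in> I" "i < i'" for i i'
  proof
    assume "w i = w i'"
    then have "det (four_block_mat (P i) (Q i) (P i') (Q i')) = 0"
      using PQ[OF i(1)] PQ[OF i(2)] w[OF i(1)] w[OF i(2)] v
      by (intro det_four_block_mat_eq_0_if_common_kernel[where x = "w i" and y = v]) auto
    with pairs[OF i] show False ..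
  qed
  have "inj_on w I"
  proof (rule inj_onI)
    fix i i' assume "i \<in> I" "i' \<in> I" "w i = w i'"
    then show "i = i'"
      using w_less[of i i'] w_less[of i' i] by (cases i i' rule: linorder_cases) auto
  qed
  moreover have "0\<^sub>v n \<notin> w ` I"
    using w_nonzero by (metis imageE)
  ultimately have "card I + 1 = card (insert (0\<^sub>v n) (w ` I))"
    using \<open>finite I\<close> by (simp add: card_image)
  also have "\<dots> \<le> card (carrier_vec n :: 'a vec set)"
    using w by (intro card_mono finite_carrier_vec) auto
  also have "\<dots> = card (UNIV :: 'a set) ^ n"
    by (rule card_carrier_vec)
  finally show ?thesis .
qed

lemma block_submatrix_two_by_two:
  assumes "a < b" "c < d"
    and "A a c \<in> carrier_mat j j" "A a d \<in> carrier_mat j j"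
      "A b c \<in> carrier_mat j j" "A b d \<in> carrier_mat j j"
  shows "block_submatrix j A {a, b} {c, d} = four_block_mat (A a c) (A a d) (A b c) (A b d)"
proof (rule eq_matI)
  fix x y
  assume "x < dim_row (four_block_mat (A a c) (A a d) (A b c) (A b d))"
    and "y < dim_col (four_block_mat (A a c) (A a d) (A b c) (A b d))"
  then have "x < 2 * j" "y < 2 * j"
    using assms by auto
  then show "block_submatrix j A {a, b} {c, d} $$ (x, y) = four_block_mat (A a c) (A a d) (A b c) (A b d) $$ (x, y)"
    using assms by (auto simp: block_submatrix_def four_block_mat_def div_if mod_if)
qed (use assms in \<open>auto simp: block_submatrix_def\<close>)

lemma block_submatrix_transpose:
  assumes "finite S" "finite S'"
    and carr: "\<And>i k. i \<in> S \<Longrightarrow> k \<in> S' \<Longrightarrow> A i k \<in> carrier_mat j j"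
  shows "block_submatrix j (\<lambda>k i. transpose_mat (A i k)) S' S = transpose_mat (block_submatrix j A S S')"
proof (rule eq_matI)
  fix a b
  assume "a < dim_row (transpose_mat (block_submatrix j A S S'))"
    and "b < dim_col (transpose_mat (block_submatrix j A S S'))"
  then have a: "a < card S' * j" and b: "b < card S * j"
    by (simp_all add: block_submatrix_def mult.commute)
  then have "j > 0" by (cases "j = 0") auto
  have "sorted_list_of_set S ! (b div j) \<in> S" "sorted_list_of_set S' ! (a div j) \<in> S'"
    using less_mult_imp_div_less[OF b] less_mult_imp_div_less[OF a] assms(1,2)
    by (metis length_sorted_list_of_set nth_mem set_sorted_list_of_set)+
  then have "A (sorted_list_of_set S ! (b div j)) (sorted_list_of_set S' ! (a div j)) \<in> carrier_mat j j"
    by (rule carr)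
  then show "block_submatrix j (\<lambda>k i. transpose_mat (A i k)) S' S $$ (a, b)
      = transpose_mat (block_submatrix j A S S') $$ (a, b)"
    using a b \<open>j > 0\<close> by (simp add: block_submatrix_def mult.commute carrier_matD)
qed (simp_all add: block_submatrix_def)

lemma block_totally_nonsingular_transpose:
  assumes "block_totally_nonsingular j r u A"
  shows "block_totally_nonsingular j u r (\<lambda>k i. transpose_mat (A i k))"
  unfolding block_totally_nonsingular_def
proof (intro conjI allI impI)
  have GL: "\<And>i k. i < r \<Longrightarrow> k < u \<Longrightarrow> in_GL j (A i k)"
    using assms by (simp add: block_totally_nonsingular_def)
  then show "in_GL j (transpose_mat (A i k))" if "k < u" "i < r" for k i
    using GL[OF that(2,1)] det_transpose[of "A i k" j] by (auto simp: in_GL_def)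
  fix S' S
  assume S': "S' \<subseteq> {0..<u}" and S: "S \<subseteq> {0..<r}" and "card S' = card S"
  then have "det (block_submatrix j A S S') \<noteq> 0"
    using assms by (simp add: block_totally_nonsingular_def)
  moreover have "block_submatrix j A S S' \<in> carrier_mat (j * card S) (j * card S)"
    using \<open>card S' = card S\<close> by (simp add: block_submatrix_def)
  moreover have "block_submatrix j (\<lambda>k i. transpose_mat (A i k)) S' S = transpose_mat (block_submatrix j A S S')"
    using S S' GL finite_subset[OF S] finite_subset[OF S']
    by (intro block_submatrix_transpose) (auto simp: in_GL_def subset_iff)
  ultimately show "det (block_submatrix j (\<lambda>k i. transpose_mat (A i k)) S' S) \<noteq> 0"
    by (simp add: det_transpose)
qed

lemma block_totally_nonsingular_rows_bound:
  fixes A :: "nat \<Rightarrow> nat \<Rightarrow> 'a::{field,finite} mat"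
  assumes A: "block_totally_nonsingular j r u A" and "u \<ge> 2" and "j > 0"
  shows "r + 1 \<le> card (UNIV :: 'a set) ^ j"
proof -
  have GL: "A i k \<in> carrier_mat j j \<and> det (A i k) \<noteq> 0" if "i < r" "k < u" for i k
    using A that by (simp add: block_totally_nonsingular_def in_GL_def)
  have "card {0..<r} + 1 \<le> card (UNIV :: 'a set) ^ j"
  proof (rule card_le_of_nonsingular_block_pairs[where P = "\<lambda>i. A i 0" and Q = "\<lambda>i. A i 1"])
    show "A i 0 \<in> carrier_mat j j \<and> A i 1 \<in> carrier_mat j j \<and> det (A i 0) \<noteq> 0 \<and> det (A i 1) \<noteq> 0"
      if "i \<in> {0..<r}" for i
      using GL that \<open>u \<ge> 2\<close> by auto
    fix i i' assume "i \<in> {0..<r}" "i' \<in> {0..<r}" "i < i'"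
    then have "det (block_submatrix j A {i, i'} {0, 1}) \<noteq> 0"
      using A \<open>u \<ge> 2\<close> by (auto simp: block_totally_nonsingular_def)
    moreover have "block_submatrix j A {i, i'} {0, 1} = four_block_mat (A i 0) (A i 1) (A i' 0) (A i' 1)"
      using GL \<open>i < i'\<close> \<open>i' \<in> {0..<r}\<close> \<open>u \<ge> 2\<close> by (intro block_submatrix_two_by_two) auto
    ultimately show "det (four_block_mat (A i 0) (A i 1) (A i' 0) (A i' 1)) \<noteq> 0"
      by simp
  qed (use \<open>j > 0\<close> in auto)
  then show ?thesis by simp
qed

lemma log_le_of_le_power:
  fixes b x :: real
  assumes "1 < b" "0 < x" "x \<le> b ^ n"
  shows "log b x \<le> n"
proof -
  have "log b x \<le> log b (b ^ n)"
    using assms by (subst log_le_cancel_iff) auto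
  also have "\<dots> = n"
    using assms by simp
  finally show ?thesis .
qed

theorem mainTheorem11:
  fixes r u j q :: nat
  assumes "min r u > 1"
    and "card (UNIV :: 'a set) = q"
    and "j > 0"
    and "\<exists>A :: nat \<Rightarrow> nat \<Rightarrow> ('a::{field,finite}) mat. block_totally_nonsingular j r u A"
  shows "int j \<ge> \<lceil>max (log (real q) (real (r + 1))) (log (real q) (real (u + 1)))\<rceil>"
proof -
  obtain A :: "nat \<Rightarrow> nat \<Rightarrow> 'a mat" where A: "block_totally_nonsingular j r u A"
    using assms(4) by blast
  have "r + 1 \<le> q ^ j"
    using block_totally_nonsingular_rows_bound[OF A] assms by simp
  moreover have "u + 1 \<le> q ^ j"
    using block_totally_nonsingular_rows_bound[OF block_totally_nonsingular_transpose[OF A]] assms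
    by simp
  moreover have "q \<ge> 2"
    using card_mono[of "UNIV :: 'a set" "{0, 1}"] assms(2) by simp
  ultimately have "log q (r + 1) \<le> j" "log q (u + 1) \<le> j"
    by (simp_all add: log_le_of_le_power flip: of_nat_power)
  then show ?thesis
    by (simp add: ceiling_le_iff)
qed

end
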